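(* Let $U$ be a finite nonempty set, let $(T,I,N)$ be an IMTL triplet, let $\widetilde{R}$ be a $T$-preorder relation on $U$, and let $A$ be a fuzzy set on $U$. Then $A$ is granularly representable with respect to $\widetilde{R}$ if and only if for all $u,v\in U$ the granules $\widetilde{R}^+_{A(u)}(u)$ and $\widetilde{R}^-_{N(A(v))}(v)$ are $T$-disjoint.
   Context: A residual triplet $(T,I,N)$ consists of a left-continuous $t$-norm $T$, its residual implicator $I(x,y)=\sup\{\beta\in[0,1]: T(x,\beta)\le y\}$, and the induced negator $N(x)=I(x,0)$; it is an IMTL triplet if $N$ is involutive ($N(N(x))=x$ for all $x$). A fuzzy set on $U$ is a map $U\to[0,1]$; its complement is $coA(u)=N(A(u))$. A fuzzy relation $\widetilde{R}:U\times U\to[0,1]$ is a $T$-preorder if it is reflexive and $T$-transitive ($T(\widetilde{R}(u,v),\widetilde{R}(v,w))\le\widetilde{R}(u,w)$). Granules: $\widetilde{R}^+_\lambda(u)$ is the fuzzy set $w\mapsto T(\widetilde{R}(w,u),\lambda)$ and $\widetilde{R}^-_\lambda(u)$ is the fuzzy set $w\mapsto T(\widetilde{R}(u,w),\lambda)$. Two fuzzy sets $B,C$ are $T$-disjoint if $T(B(w),C(w))=0$ for all $w\in U$. A fuzzy set $A$ is granularly representable w.r.t. $\widetilde{R}$ if $T(\widetilde{R}(v,u),A(u))\le A(v)$ for all $u,v\in U$ (equivalently, $A(v)=\max_{u\in U}T(\widetilde{R}(v,u),A(u))$ for all $v$). *)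

theory Defs
  imports Complex_Main
begin

text \<open>Fuzzy truth values are reals in [0,1]; binary operations are functions
real \<Rightarrow> real \<Rightarrow> real, whose behaviour outside [0,1] is irrelevant.\<close>

definition tnorm :: "(real \<Rightarrow> real \<Rightarrow> real) \<Rightarrow> bool" where
  "tnorm T \<longleftrightarrow>
     (\<forall>x\<in>{0..1}. \<forall>y\<in>{0..1}. T x y \<in> {0..1}) \<and>
     (\<forall>x\<in>{0..1}. \<forall>y\<in>{0..1}. T x y = T y x) \<and>
     (\<forall>x\<in>{0..1}. \<forall>y\<in>{0..1}. \<forall>z\<in>{0..1}. T (T x y) z = T x (T y z)) \<and>
     (\<forall>x\<in>{0..1}. \<forall>y\<in>{0..1}. \<forall>z\<in>{0..1}. y \<le> z \<longrightarrow> T x y \<le> T x z) \<and>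
     (\<forall>x\<in>{0..1}. T x 1 = x)"

text \<open>Left-continuity (in the first argument; equivalent to both by commutativity).\<close>
definition left_continuous_tnorm :: "(real \<Rightarrow> real \<Rightarrow> real) \<Rightarrow> bool" where
  "left_continuous_tnorm T \<longleftrightarrow> tnorm T \<and>
     (\<forall>y\<in>{0..1}. \<forall>x\<in>{0<..1}. ((\<lambda>z. T z y) \<longlongrightarrow> T x y) (at_left x))"

definition residual_implicator :: "(real \<Rightarrow> real \<Rightarrow> real) \<Rightarrow> real \<Rightarrow> real \<Rightarrow> real" where
  "residual_implicator T x y = Sup {\<beta>\<in>{0..1}. T x \<beta> \<le> y}"

definition induced_negator :: "(real \<Rightarrow> real \<Rightarrow> real) \<Rightarrow> real \<Rightarrow> real" where
  "induced_negator T x = residual_implicator T x 0"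

definition IMTL_triplet ::
  "(real \<Rightarrow> real \<Rightarrow> real) \<Rightarrow> (real \<Rightarrow> real \<Rightarrow> real) \<Rightarrow> (real \<Rightarrow> real) \<Rightarrow> bool" where
  "IMTL_triplet T I N \<longleftrightarrow> left_continuous_tnorm T \<and>
     I = residual_implicator T \<and> N = induced_negator T \<and>
     (\<forall>x\<in>{0..1}. N (N x) = x)"

definition fuzzy_set_on :: "'a set \<Rightarrow> ('a \<Rightarrow> real) \<Rightarrow> bool" where
  "fuzzy_set_on U A \<longleftrightarrow> (\<forall>u\<in>U. A u \<in> {0..1})"

definition fuzzy_relation_on :: "'a set \<Rightarrow> ('a \<Rightarrow> 'a \<Rightarrow> real) \<Rightarrow> bool" where
  "fuzzy_relation_on U R \<longleftrightarrow> (\<forall>u\<in>U. \<forall>v\<in>U. R u v \<in> {0..1})"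

definition T_preorder :: "(real \<Rightarrow> real \<Rightarrow> real) \<Rightarrow> 'a set \<Rightarrow> ('a \<Rightarrow> 'a \<Rightarrow> real) \<Rightarrow> bool" where
  "T_preorder T U R \<longleftrightarrow> fuzzy_relation_on U R \<and>
     (\<forall>u\<in>U. R u u = 1) \<and>
     (\<forall>u\<in>U. \<forall>v\<in>U. \<forall>w\<in>U. T (R u v) (R v w) \<le> R u w)"

definition granule_plus :: "(real \<Rightarrow> real \<Rightarrow> real) \<Rightarrow> ('a \<Rightarrow> 'a \<Rightarrow> real) \<Rightarrow> real \<Rightarrow> 'a \<Rightarrow> 'a \<Rightarrow> real" where
  "granule_plus T R l u = (\<lambda>w. T (R w u) l)"

definition granule_minus :: "(real \<Rightarrow> real \<Rightarrow> real) \<Rightarrow> ('a \<Rightarrow> 'a \<Rightarrow> real) \<Rightarrow> real \<Rightarrow> 'a \<Rightarrow> 'a \<Rightarrow> real" where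
  "granule_minus T R l u = (\<lambda>w. T (R u w) l)"

definition T_disjoint :: "(real \<Rightarrow> real \<Rightarrow> real) \<Rightarrow> 'a set \<Rightarrow> ('a \<Rightarrow> real) \<Rightarrow> ('a \<Rightarrow> real) \<Rightarrow> bool" where
  "T_disjoint T U B C \<longleftrightarrow> (\<forall>w\<in>U. T (B w) (C w) = 0)"

definition granularly_representable ::
  "(real \<Rightarrow> real \<Rightarrow> real) \<Rightarrow> 'a set \<Rightarrow> ('a \<Rightarrow> 'a \<Rightarrow> real) \<Rightarrow> ('a \<Rightarrow> real) \<Rightarrow> bool" where
  "granularly_representable T U R A \<longleftrightarrow> (\<forall>u\<in>U. \<forall>v\<in>U. T (R v u) (A u) \<le> A v)"

end

theory Submission
  imports Defs
begin

text \<open>In an IMTL triplet, residuation and involutivity of the negator give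
\<open>T a (N c) = 0 \<longleftrightarrow> a \<le> c\<close>. After regrouping by associativity and
commutativity, \<open>T\<close>-disjointness of the granules \<open>R+_A(u)(u)\<close> and
\<open>R-_N(A(v))(v)\<close> at a point \<open>w\<close> therefore says
\<open>T (T (R v w) (R w u)) (A u) \<le> A v\<close>. This follows from granular
representability by \<open>T\<close>-transitivity, and for \<open>w = v\<close> it is granular
representability by reflexivity.\<close>

lemma induced_negator_Sup: "induced_negator T x = Sup {\<beta>\<in>{0..1}. T x \<beta> \<le> 0}"
  unfolding induced_negator_def residual_implicator_def ..

lemma bdd_above_unit_interval: "bdd_above {\<beta>\<in>{0..1::real}. P \<beta>}"
  by (rule bdd_aboveI[of _ 1]) simp

context
  fixes T :: "real \<Rightarrow> real \<Rightarrow> real"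
  assumes tnorm: "tnorm T"
begin

lemma tnorm_commute: "x \<in> {0..1} \<Longrightarrow> y \<in> {0..1} \<Longrightarrow> T x y = T y x"
  using tnorm unfolding tnorm_def by blast

lemma tnorm_assoc:
  "x \<in> {0..1} \<Longrightarrow> y \<in> {0..1} \<Longrightarrow> z \<in> {0..1} \<Longrightarrow> T (T x y) z = T x (T y z)"
  using tnorm unfolding tnorm_def by blast

lemma tnorm_range: "x \<in> {0..1} \<Longrightarrow> y \<in> {0..1} \<Longrightarrow> T x y \<in> {0..1}"
  using tnorm unfolding tnorm_def by blast

lemma tnorm_nonneg: "x \<in> {0..1} \<Longrightarrow> y \<in> {0..1} \<Longrightarrow> 0 \<le> T x y"
  using tnorm_range by simp

lemma tnorm_mono_right:
  "x \<in> {0..1} \<Longrightarrow> y \<in> {0..1} \<Longrightarrow> z \<in> {0..1} \<Longrightarrow> y \<le> z \<Longrightarrow> T x y \<le> T x z"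
  using tnorm unfolding tnorm_def by blast

lemma tnorm_mono_left:
  "x \<in> {0..1} \<Longrightarrow> y \<in> {0..1} \<Longrightarrow> z \<in> {0..1} \<Longrightarrow> x \<le> y \<Longrightarrow> T x z \<le> T y z"
  using tnorm_mono_right[of z x y] tnorm_commute[of x z] tnorm_commute[of y z] by simp

lemma tnorm_one_left:
  assumes "x \<in> {0..1}"
  shows "T 1 x = x"
proof -
  have "T 1 x = T x 1"
    using tnorm_commute[of 1 x] assms by simp
  also have "\<dots> = x"
    using tnorm assms unfolding tnorm_def by blast
  finally show ?thesis .
qed

lemma tnorm_zero_right: "x \<in> {0..1} \<Longrightarrow> T x 0 = 0"
  using tnorm_mono_left[of x 1 0] tnorm_nonneg[of x 0] tnorm_commute[of 1 0] tnorm_one_left[of 0]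
  by simp

lemma tnorm_rearrange:
  assumes "a \<in> {0..1}" "b \<in> {0..1}" "c \<in> {0..1}" "d \<in> {0..1}"
  shows "T (T a b) (T c d) = T (T (T c a) b) d"
proof -
  have ab: "T a b \<in> {0..1}" and cd: "T c d \<in> {0..1}" and bd: "T b d \<in> {0..1}"
    and ca: "T c a \<in> {0..1}"
    using assms tnorm_range by auto
  have "T (T a b) (T c d) = T (T c d) (T a b)"
    using tnorm_commute[OF ab cd] .
  also have "\<dots> = T c (T (T a b) d)"
    using tnorm_assoc[OF assms(3,4) ab] tnorm_commute[OF assms(4) ab] by simp
  also have "\<dots> = T (T c a) (T b d)"
    using tnorm_assoc[OF assms(1,2,4)] tnorm_assoc[OF assms(3,1) bd] by simp
  also have "\<dots> = T (T (T c a) b) d"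
    using tnorm_assoc[OF ca assms(2,4)] by simp
  finally show ?thesis .
qed

lemma induced_negator_range:
  assumes "x \<in> {0..1}"
  shows "induced_negator T x \<in> {0..1}"
proof -
  let ?S = "{\<beta>\<in>{0..1}. T x \<beta> \<le> 0}"
  have "0 \<in> ?S"
    using tnorm_zero_right[OF assms] by simp
  then have "0 \<le> Sup ?S" and "Sup ?S \<le> 1"
    by (auto intro!: cSup_upper cSup_least bdd_above_unit_interval)
  then show ?thesis
    by (simp add: induced_negator_Sup)
qed

lemma le_induced_negator:
  assumes "a \<in> {0..1}" "c \<in> {0..1}" "T a c = 0"
  shows "a \<le> induced_negator T c"
  unfolding induced_negator_Sup
  using assms tnorm_commute[of a c]
  by (auto intro: cSup_upper bdd_above_unit_interval)

end

text \<open>Left-continuity is what makes the supremum defining \<open>N x\<close> attained.\<close>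
lemma tnorm_induced_negator_eq_0:
  assumes lc: "left_continuous_tnorm T" and x: "x \<in> {0..1}"
  shows "T x (induced_negator T x) = 0"
proof -
  have tnorm: "tnorm T"
    using lc unfolding left_continuous_tnorm_def by blast
  let ?S = "{\<beta>\<in>{0..1}. T x \<beta> \<le> 0}"
  let ?s = "induced_negator T x"
  have s: "?s \<in> {0..1}"
    using induced_negator_range[OF tnorm x] .
  have "T ?s x \<le> 0" if "?s \<noteq> 0"
  proof (rule tendsto_upperbound)
    show "((\<lambda>z. T z x) \<longlongrightarrow> T ?s x) (at_left ?s)"
      using lc s x \<open>?s \<noteq> 0\<close> unfolding left_continuous_tnorm_def by auto
    have "T z x \<le> 0" if z: "z \<in> {0<..<?s}" for z
    proof -
      have "0 \<in> ?S"
        using tnorm_zero_right[OF tnorm x] by simp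
      moreover have "z < Sup ?S"
        using z by (simp add: induced_negator_Sup)
      ultimately obtain b where b: "b \<in> ?S" "z < b"
        by (blast elim: less_cSupE)
      then show "T z x \<le> 0"
        using z s x tnorm_mono_right[OF tnorm x, of z b] tnorm_commute[OF tnorm, of z x] by auto
    qed
    then show "\<forall>\<^sub>F z in at_left ?s. T z x \<le> 0"
      using s \<open>?s \<noteq> 0\<close> eventually_at_left_real[of 0 ?s] by (auto elim: eventually_mono)
  qed simp
  then show ?thesis
    using tnorm_zero_right[OF tnorm x] tnorm_nonneg[OF tnorm s x] tnorm_commute[OF tnorm s x]
    by (cases "?s = 0") auto
qed

lemma IMTL_tnorm_negator_eq_0_iff_le:
  assumes "IMTL_triplet T I N" "a \<in> {0..1}" "c \<in> {0..1}"
  shows "T a (N c) = 0 \<longleftrightarrow> a \<le> c"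
proof -
  have lc: "left_continuous_tnorm T" and N: "N = induced_negator T"
    and involutive: "N (N c) = c"
    using assms unfolding IMTL_triplet_def by auto
  have tnorm: "tnorm T"
    using lc unfolding left_continuous_tnorm_def by blast
  have Nc: "N c \<in> {0..1}"
    using induced_negator_range[OF tnorm \<open>c \<in> {0..1}\<close>] N by simp
  show ?thesis
  proof
    assume "T a (N c) = 0"
    then show "a \<le> c"
      using le_induced_negator[OF tnorm \<open>a \<in> {0..1}\<close> Nc] N involutive by simp
  next
    assume "a \<le> c"
    then have "T a (N c) \<le> T c (N c)"
      using assms tnorm_mono_left[OF tnorm _ _ Nc] by simp
    also have "\<dots> = 0"
      using tnorm_induced_negator_eq_0[OF lc \<open>c \<in> {0..1}\<close>] N by simp
    finally show "T a (N c) = 0"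
      using tnorm_nonneg[OF tnorm \<open>a \<in> {0..1}\<close> Nc] by simp
  qed
qed

lemma granularly_representable_iff_two_step:
  assumes "tnorm T" "T_preorder T U R" "fuzzy_set_on U A"
  shows "granularly_representable T U R A \<longleftrightarrow>
    (\<forall>u\<in>U. \<forall>v\<in>U. \<forall>w\<in>U. T (T (R v w) (R w u)) (A u) \<le> A v)"
proof
  assume gr: "granularly_representable T U R A"
  show "\<forall>u\<in>U. \<forall>v\<in>U. \<forall>w\<in>U. T (T (R v w) (R w u)) (A u) \<le> A v"
  proof (intro ballI)
    fix u v w assume "u \<in> U" "v \<in> U" "w \<in> U"
    then have "R v w \<in> {0..1}" "R w u \<in> {0..1}" "R v u \<in> {0..1}" "A u \<in> {0..1}"
        and "T (R v w) (R w u) \<le> R v u"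
      using assms(2,3) by (auto simp: T_preorder_def fuzzy_relation_on_def fuzzy_set_on_def)
    then have "T (T (R v w) (R w u)) (A u) \<le> T (R v u) (A u)"
      by (meson tnorm_mono_left[OF assms(1)] tnorm_range[OF assms(1)])
    also have "\<dots> \<le> A v"
      using gr \<open>u \<in> U\<close> \<open>v \<in> U\<close> unfolding granularly_representable_def by blast
    finally show "T (T (R v w) (R w u)) (A u) \<le> A v" .
  qed
next
  assume "\<forall>u\<in>U. \<forall>v\<in>U. \<forall>w\<in>U. T (T (R v w) (R w u)) (A u) \<le> A v"
  then have "T (T (R v v) (R v u)) (A u) \<le> A v" if "u \<in> U" "v \<in> U" for u v
    using that by blast
  moreover have "T (R v v) (R v u) = R v u" if "u \<in> U" "v \<in> U" for u v
    using that assms tnorm_one_left[of T "R v u"]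
    by (auto simp: T_preorder_def fuzzy_relation_on_def)
  ultimately show "granularly_representable T U R A"
    unfolding granularly_representable_def by simp
qed

theorem proposition4:
  fixes U :: "'a set" and T I :: "real \<Rightarrow> real \<Rightarrow> real" and N :: "real \<Rightarrow> real"
    and R :: "'a \<Rightarrow> 'a \<Rightarrow> real" and A :: "'a \<Rightarrow> real"
  assumes "finite U" and "U \<noteq> {}"
    and "IMTL_triplet T I N"
    and "T_preorder T U R"
    and "fuzzy_set_on U A"
  shows "granularly_representable T U R A \<longleftrightarrow>
    (\<forall>u\<in>U. \<forall>v\<in>U. T_disjoint T U (granule_plus T R (A u) u) (granule_minus T R (N (A v)) v))"
proof -
  have tnorm: "tnorm T"
    using assms(3) unfolding IMTL_triplet_def left_continuous_tnorm_def by blast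
  have R: "R u v \<in> {0..1}" if "u \<in> U" "v \<in> U" for u v
    using that assms(4) by (auto simp: T_preorder_def fuzzy_relation_on_def)
  have A: "A u \<in> {0..1}" and NA: "N (A u) \<in> {0..1}" if "u \<in> U" for u
    using that assms(3,5) induced_negator_range[OF tnorm]
    by (auto simp: IMTL_triplet_def fuzzy_set_on_def)
  have "T (granule_plus T R (A u) u w) (granule_minus T R (N (A v)) v w) = 0
      \<longleftrightarrow> T (T (R v w) (R w u)) (A u) \<le> A v"
    if "u \<in> U" "v \<in> U" "w \<in> U" for u v w
  proof -
    have "T (T (R w u) (A u)) (T (R v w) (N (A v))) = T (T (T (R v w) (R w u)) (A u)) (N (A v))"
      using that by (intro tnorm_rearrange[OF tnorm] R A NA)
    then show ?thesis
      using that IMTL_tnorm_negator_eq_0_iff_le[OF assms(3)] tnorm_range[OF tnorm] R A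
      by (simp add: granule_plus_def granule_minus_def)
  qed
  then show ?thesis
    unfolding granularly_representable_iff_two_step[OF tnorm assms(4,5)] T_disjoint_def
    by auto
qed

end
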